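(* Let $(\mathcal M,G)$ be a degeneration diagram with associated one-parameter homogeneous deformation $\pi$, general fibre $X_s=X(\mathcal M)$ and special fibre $X_0=X(\mathcal M^{(0)})$, both rational $\mathbb C^*$-surfaces (so that all invariant Weil divisors are Cartier and $\pi_{s,0}$ is defined on all invariant divisors of $X_s$). Then the homomorphism $\pi_{s,0}$ from the group of $\mathbb C^*$-invariant divisors of $X_s$ to that of $X_0$ is given on prime divisors by $$D^{(s)}_\pm\mapsto D^{(0)}_\pm,\qquad D^{(s)}_{v,P}\mapsto D^{(0)}_{v,P}\ (P\in\mathbb P^1\setminus\{0,s\}),$$ $$D^{(s)}_{v_0,0}\mapsto\sum_{\overline{v_0v}\in E(G)}\lambda(v)\,D^{(0)}_{v_0+v,0},\qquad D^{(s)}_{v_s,s}\mapsto\sum_{\overline{vv_s}\in E(G)}\lambda(v)\,D^{(0)}_{v+v_s,0},$$ where $E(G)$ is the edge set of $G$, $v_0$ runs over vertices of $\mathcal M_0$ and $v_s$ over vertices of $\mathcal M_s$.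
   Context: A rational $\mathbb C^*$-surface is a smooth complete rational surface with an effective $\mathbb C^*$-action. A multidivisor $\mathcal M$ on $\mathbb P^1$ consists of, for each $P\in\mathbb P^1$, a polyhedral subdivision $\mathcal M_P$ of $\mathbb Q$ with finitely many rational vertices, all but finitely many $\mathcal M_P$ being the subdivision with the single vertex $0$ (trivial slices), together with $(\mathcal M_-,\mathcal M_+)\in\{\circ,\bullet\}^2$, such that $\sum_P\min(\text{vertices of }\mathcal M_P)<0$ if $\mathcal M_-=\circ$ and $\sum_P\max(\text{vertices of }\mathcal M_P)>0$ if $\mathcal M_+=\circ$. A multidivisor determines a complete normal rational $\mathbb C^*$-surface $X(\mathcal M)$: it is the $T$-variety $X(\Xi)$ (with $N=\mathbb Z$, $T=\mathbb C^*$) for any divisorial fan $\Xi$ on $\mathbb P^1$ with slices $\Xi_P=\mathcal M_P$ which contains a polyhedral divisor with tail cone $\mathbb Q_{\le0}$ (resp. $\mathbb Q_{\ge0}$) and locus all of $\mathbb P^1$ iff $\mathcal M_-=\circ$ (resp. $\mathcal M_+=\circ$); every complete normal rational $\mathbb C^*$-surface arises this way. The invariant prime divisors of $X(\mathcal M)$ are $D_{v,P}$ for $P\in\mathbb P^1$ and $v$ a vertex of $\mathcal M_P$, and $D_-$ (resp. $D_+$) when $\mathcal M_-=\bullet$ (resp. $\mathcal M_+=\bullet$). For $v\in\mathbb Q$, $\lambda(v)$ denotes the denominator of $v$ in lowest terms. Degeneration diagrams. Fix two distinct points $0,s\in\mathbb P^1$. A degeneration diagram $(\mathcal M,G)$ consists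 of a multidivisor $\mathcal M$ and a connected bipartite graph $G$ whose vertex set is the disjoint union of the vertex sets of $\mathcal M_0$ and $\mathcal M_s$ (every edge joins a vertex of $\mathcal M_0$ to a vertex of $\mathcal M_s$), which can be drawn with straight non-crossing edges when $\mathcal M_0$ and $\mathcal M_s$ are placed on two parallel lines, and in which every vertex of degree $>1$ is an integer. Let $\mathcal M^{(0)}$ be the multidivisor with $\mathcal M^{(0)}_\pm=\mathcal M_\pm$, $\mathcal M^{(0)}_P=\mathcal M_P$ for $P\ne0,s$, $\mathcal M^{(0)}_s$ trivial, and $\mathcal M^{(0)}_0$ the subdivision whose vertices are the sums $v_0+v_s$ over edges $\overline{v_0v_s}$ of $G$. The edges of $G$ determine an admissible one-parameter Minkowski decomposition (each coefficient $[v^-,v^+]$ of the slice at $0$ of a divisorial fan for $\mathcal M^{(0)}$ decomposes as $[v_0^-,v_0^+]+[v_s^-,v_s^+]$ with $\overline{v_0^\pm v_s^\pm}$ edges of $G$), hence a one-parameter homogeneous deformation $\pi$ with special fibre $X_0=X(\mathcal M^{(0)})$ and general fibre $X_s=X(\mathcal M)$. Invariant divisors on $X_0$ and $X_s$ are written $D^{(0)}_{v,P},D^{(0)}_\pm$ and $D^{(s)}_{v,P},D^{(s)}_\pm$. The map $\pi_{s,0}$: in general, for a homogeneous deformation of $X(\Xi)$ (Altmann–Hausen divisorial fan $\Xi$ on $\mathbb P^1$, slice decomposition $\mathcal D_0=\mathcal D_0^0+\mathcal D_0^1$), an invariant Cartier divisor on $X_s$ is $D_h$ for a support function $h=\sum_P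 h_P\otimes P$ (continuous functions $h_P$ on the slices, affine on each polyhedron, with common linear part $h^0$), and $\pi_{s,0}(D_h)=D_{h^{(0)}}$ where $h^{(0)}_P=h_P$ for $P\notin\{0,s\}$, $h^{(0)}_s=h^0$, and $h^{(0)}_0(v)=h_0(v_0)+h_s(v_1)$ whenever $v=v_0+v_1$ with $v_0\in\mathcal D_0^0$, $v_1\in\mathcal D_0^1$ for some common $\mathcal D$. The correspondence between support functions and Weil divisors (Petersen–Süß) is: $D_h=-\sum_{P,v}\lambda(v)h_P(v)D_{v,P}-\sum_{\pm}h^0(\pm1)D_\pm$. *)

theory Defs
  imports Complex_Main
begin

text \<open>Points of the projective line P^1 = C \<union> {\<infinity>}; None stands for \<infinity>.\<close>
type_synonym pt = "complex option"

text \<open>A multidivisor: for each point P the vertex set of the subdivision M_P of Q,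
  and the two markers (True = bullet, False = circ) for M_- and M_+.\<close>
record multidiv =
  verts :: "pt \<Rightarrow> rat set"
  minus_bullet :: bool
  plus_bullet :: bool

definition lam :: "rat \<Rightarrow> int" where
  "lam v = snd (quotient_of v)"

definition nontriv :: "multidiv \<Rightarrow> pt set" where
  "nontriv M = {P. verts M P \<noteq> {0}}"

definition vmin :: "multidiv \<Rightarrow> pt \<Rightarrow> rat" where
  "vmin M P = Min (verts M P)"

definition vmax :: "multidiv \<Rightarrow> pt \<Rightarrow> rat" where
  "vmax M P = Max (verts M P)"

definition is_multidiv :: "multidiv \<Rightarrow> bool" where
  "is_multidiv M \<longleftrightarrow>
     (\<forall>P. finite (verts M P) \<and> verts M P \<noteq> {}) \<and> finite (nontriv M) \<and>
     (\<not> minus_bullet M \<longrightarrow> (\<Sum>P\<in>nontriv M. vmin M P) < 0) \<and>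
     (\<not> plus_bullet M \<longrightarrow> (\<Sum>P\<in>nontriv M. vmax M P) > 0)"

text \<open>v < w are adjacent vertices of M_P (they bound a polyhedron of M_P).\<close>
definition adjacent :: "multidiv \<Rightarrow> pt \<Rightarrow> rat \<Rightarrow> rat \<Rightarrow> bool" where
  "adjacent M P v w \<longleftrightarrow> v \<in> verts M P \<and> w \<in> verts M P \<and> v < w \<and>
     (\<forall>u\<in>verts M P. \<not> (v < u \<and> u < w))"

text \<open>Smoothness of X(M) (so that X(M) is a rational C*-surface), via the standard
  local toric charts at the fixed points: hyperbolic fixed points
  D_{v,P} \<inter> D_{w,P}, parabolic fixed points on D_\<plusminus>, and the elliptic fixed
  points x_\<plusminus> when M_\<plusminus> = circ.\<close>
definition smooth_md :: "multidiv \<Rightarrow> bool" where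
  "smooth_md M \<longleftrightarrow>
     (\<forall>P v w. adjacent M P v w \<longrightarrow> of_int (lam v * lam w) * (w - v) = 1) \<and>
     (minus_bullet M \<longrightarrow> (\<forall>P. lam (vmin M P) = 1)) \<and>
     (plus_bullet M \<longrightarrow> (\<forall>P. lam (vmax M P) = 1)) \<and>
     (\<not> minus_bullet M \<longrightarrow>
        card {P. vmin M P \<notin> \<int>} \<le> 2 \<and>
        of_int (\<Prod>P\<in>{P. vmin M P \<notin> \<int>}. lam (vmin M P)) * (\<Sum>P\<in>nontriv M. vmin M P) = -1) \<and>
     (\<not> plus_bullet M \<longrightarrow>
        card {P. vmax M P \<notin> \<int>} \<le> 2 \<and>
        of_int (\<Prod>P\<in>{P. vmax M P \<notin> \<int>}. lam (vmax M P)) * (\<Sum>P\<in>nontriv M. vmax M P) = 1)"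

datatype pdiv = Dv rat pt | Dminus | Dplus

definition prime_divs :: "multidiv \<Rightarrow> pdiv set" where
  "prime_divs M = {Dv v P | v P. v \<in> verts M P} \<union>
     (if minus_bullet M then {Dminus} else {}) \<union> (if plus_bullet M then {Dplus} else {})"

definition ind :: "pdiv \<Rightarrow> pdiv \<Rightarrow> rat" where
  "ind x = (\<lambda>y. if y = x then 1 else 0)"

text \<open>Linear part h^0 of a support function, piecewise linear on the tail fan
  {Q_{\<le>0}, Q_{\<ge>0}}: slope am on Q_{\<le>0}, slope ap on Q_{\<ge>0}.\<close>
definition hlin :: "rat \<Rightarrow> rat \<Rightarrow> rat \<Rightarrow> rat" where
  "hlin am ap x = (if x \<le> 0 then am * x else ap * x)"

text \<open>Cartier support function h = \<Sum> h_P \<otimes> P on the divisorial fan of X(M):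
  on each polyhedron of M_P, h_P is affine with integral slope and integral
  constant term; on the unbounded polyhedra the slope is that of h^0;
  h_P = h^0 for all but finitely many P; and on a polyhedral divisor with
  complete locus P^1 (present iff the marker is circ) h is of the form u + div(f),
  i.e. the constant terms sum to zero.\<close>
definition cartier_supp :: "multidiv \<Rightarrow> (pt \<Rightarrow> rat \<Rightarrow> rat) \<Rightarrow> rat \<Rightarrow> rat \<Rightarrow> bool" where
  "cartier_supp M h am ap \<longleftrightarrow>
     am \<in> \<int> \<and> ap \<in> \<int> \<and>
     (\<forall>P. (\<exists>c\<in>\<int>. \<forall>x. x \<le> vmin M P \<longrightarrow> h P x = am * x + c) \<and>
          (\<exists>c\<in>\<int>. \<forall>x. x \<ge> vmax M P \<longrightarrow> h P x = ap * x + c) \<and>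
          (\<forall>v w. adjacent M P v w \<longrightarrow>
             (\<exists>u\<in>\<int>. \<exists>c\<in>\<int>. \<forall>x. v \<le> x \<and> x \<le> w \<longrightarrow> h P x = u * x + c))) \<and>
     finite {P. h P \<noteq> hlin am ap} \<and>
     (\<not> minus_bullet M \<longrightarrow>
        (\<Sum>P\<in>{P. h P \<noteq> hlin am ap} \<union> nontriv M. h P (vmin M P) - am * vmin M P) = 0) \<and>
     (\<not> plus_bullet M \<longrightarrow>
        (\<Sum>P\<in>{P. h P \<noteq> hlin am ap} \<union> nontriv M. h P (vmax M P) - ap * vmax M P) = 0)"

text \<open>Petersen--Suess: D_h = - \<Sum> lambda(v) h_P(v) D_{v,P} - \<Sum> h^0(\<plusminus>1) D_\<plusminus>
  (divisors as rational-valued functions on prime divisor labels).\<close>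
fun Dh :: "multidiv \<Rightarrow> (pt \<Rightarrow> rat \<Rightarrow> rat) \<Rightarrow> rat \<Rightarrow> rat \<Rightarrow> pdiv \<Rightarrow> rat" where
  "Dh M h am ap (Dv v P) = (if v \<in> verts M P then - of_int (lam v) * h P v else 0)"
| "Dh M h am ap Dminus = (if minus_bullet M then - hlin am ap (-1) else 0)"
| "Dh M h am ap Dplus = (if plus_bullet M then - hlin am ap 1 else 0)"

text \<open>Degeneration diagram (M, G) with respect to the distinct points p0 ("0") and ps ("s");
  G is given by its edge set E \<subseteq> V(M_0) \<times> V(M_s).\<close>
definition degen_diagram :: "multidiv \<Rightarrow> (rat \<times> rat) set \<Rightarrow> pt \<Rightarrow> pt \<Rightarrow> bool" where
  "degen_diagram M E p0 ps \<longleftrightarrow>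
     is_multidiv M \<and> p0 \<noteq> ps \<and>
     E \<subseteq> verts M p0 \<times> verts M ps \<and>
     (let R = {(Inl a, Inr b) | a b. (a, b) \<in> E} \<union> {(Inr b, Inl a) | a b. (a, b) \<in> E};
          VV = Inl ` verts M p0 \<union> Inr ` verts M ps
      in \<forall>x\<in>VV. \<forall>y\<in>VV. (x, y) \<in> R\<^sup>*) \<and>
     (\<forall>a b a' b'. (a, b) \<in> E \<and> (a', b') \<in> E \<and> a < a' \<longrightarrow> b \<le> b') \<and>
     (\<forall>a\<in>verts M p0. card {b. (a, b) \<in> E} > 1 \<longrightarrow> a \<in> \<int>) \<and>
     (\<forall>b\<in>verts M ps. card {a. (a, b) \<in> E} > 1 \<longrightarrow> b \<in> \<int>)"

definition M0 :: "multidiv \<Rightarrow> (rat \<times> rat) set \<Rightarrow> pt \<Rightarrow> pt \<Rightarrow> multidiv" where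
  "M0 M E p0 ps =
     \<lparr> verts = (\<lambda>P. if P = p0 then {a + b | a b. (a, b) \<in> E}
                    else if P = ps then {0} else verts M P),
       minus_bullet = minus_bullet M, plus_bullet = plus_bullet M \<rparr>"

text \<open>The support function h^(0) on X_0 (values needed at vertices).\<close>
definition hpi :: "(rat \<times> rat) set \<Rightarrow> pt \<Rightarrow> pt \<Rightarrow> (pt \<Rightarrow> rat \<Rightarrow> rat) \<Rightarrow> rat \<Rightarrow> rat
    \<Rightarrow> pt \<Rightarrow> rat \<Rightarrow> rat" where
  "hpi E p0 ps h am ap P v =
     (if P = p0 then (let e = (THE e. e \<in> E \<and> fst e + snd e = v) in h p0 (fst e) + h ps (snd e))
      else if P = ps then hlin am ap v else h P v)"

fun pimg :: "(rat \<times> rat) set \<Rightarrow> pt \<Rightarrow> pt \<Rightarrow> pdiv \<Rightarrow> pdiv \<Rightarrow> rat" where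
  "pimg E p0 ps (Dv v P) =
     (if P = p0 then (\<lambda>y. \<Sum>b\<in>{b. (v, b) \<in> E}. of_int (lam b) * ind (Dv (v + b) p0) y)
      else if P = ps then (\<lambda>y. \<Sum>a\<in>{a. (a, v) \<in> E}. of_int (lam a) * ind (Dv (a + v) p0) y)
      else ind (Dv v P))"
| "pimg E p0 ps Dminus = ind Dminus"
| "pimg E p0 ps Dplus = ind Dplus"

end

theory Submission
  imports Defs
begin

(* Every divisor on X_s is a rational function on prime-divisor labels, and we describe
   pi_{s,0} by an explicit linear map "push": it keeps the coefficients away from 0 and s,
   kills the coefficients at s, and gives D_{a+b,0}, for an edge (a,b) of G, the coefficient
   lambda(b) c(D_{a,0}) + lambda(a) c(D_{b,s}).  The proof has two independent halves.

   (1) Geometry: for every support function h, D_{h^(0)} = push(D_h).  This needs that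
       distinct edges have distinct sums (non-crossing of G) and that lambda(a+b) =
       lambda(a) lambda(b) along every edge.  The latter holds because every edge has an
       integral endpoint: an edge with two non-integral endpoints has degree one at both
       ends, so by connectivity it is all of G; then M_0 and M_s are single non-integral
       vertices, which the smoothness conditions at the elliptic fixed points rule out.
   (2) Combinatorics: push sends the prime divisor D_x to the claimed image pimg x.
   The theorem is the composite of the two halves, since D_h = D_x. *)

lemma quotient_of_add_int:
  assumes "quotient_of v = (p, q)"
  shows "quotient_of (v + of_int k) = (p + k * q, q)"
proof -
  have q: "q > 0" using quotient_of_denom_pos[OF assms] .
  have "coprime (p + k * q) q"
  proof -
    have "gcd (p + k * q) q = gcd q (k * q + p)" by (simp add: gcd.commute add.commute)
    also have "\<dots> = gcd q p" by (rule gcd_add_mult)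
    finally show ?thesis using quotient_of_coprime[OF assms]
      by (simp add: coprime_iff_gcd_eq_1 gcd.commute)
  qed
  moreover have "v = Fract p q" using assms Fract_quotient_of[of v] by simp
  ultimately have "v + of_int k = Fract (fst (p + k * q, q)) (snd (p + k * q, q)) \<and>
      snd (p + k * q, q) > 0 \<and> coprime (fst (p + k * q, q)) (snd (p + k * q, q))"
    using q by (auto simp: Fract_of_int_quotient field_simps)
  then show ?thesis unfolding quotient_of_def
    by (rule the1_equality [OF quotient_of_unique])
qed

lemma lam_add_int: "k \<in> \<int> \<Longrightarrow> lam (v + k) = lam v"
  by (cases "quotient_of v") (auto elim!: Ints_cases simp: lam_def quotient_of_add_int)

lemma lam_pos: "lam v > 0"
  by (simp add: lam_def quotient_of_denom_pos')

lemma lam_eq_1_iff: "lam v = 1 \<longleftrightarrow> v \<in> \<int>"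
proof
  show "lam v = 1 \<Longrightarrow> v \<in> \<int>"
    by (cases "quotient_of v") (auto simp: lam_def dest!: quotient_of_div)
  show "v \<in> \<int> \<Longrightarrow> lam v = 1"
    by (auto elim!: Ints_cases simp: lam_def)
qed

lemma lam_ge_2: "v \<notin> \<int> \<Longrightarrow> lam v \<ge> 2"
  using lam_pos[of v] lam_eq_1_iff[of v] by linarith

lemma lam_add_if_int:
  assumes "a \<in> \<int> \<or> b \<in> \<int>"
  shows "lam (a + b) = lam a * lam b"
  using assms lam_add_int[of a b] lam_add_int[of b a] lam_eq_1_iff[of a] lam_eq_1_iff[of b]
  by (auto simp: add.commute)

lemma card_le_2_eq_pair:
  assumes "finite A" "{p, q} \<subseteq> A" "p \<noteq> q" "card A \<le> 2"
  shows "A = {p, q}"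
  using assms card_subset_eq[OF assms(1,2)] card_mono[OF assms(1,2)] by simp

text \<open>X(M) is not smooth if two slices M_p, M_q each consist of a single non-integral vertex
  a resp. b: then both markers are circ, the non-integral minima and maxima sit exactly at
  p and q, and subtracting the two elliptic smoothness conditions gives
  lambda(a) lambda(b) k = 2 for the integer k = \<Sum>_P (max M_P - min M_P), although
  lambda(a), lambda(b) \<ge> 2.\<close>
lemma not_smooth_two_nonintegral_points:
  assumes md: "is_multidiv M" and sm: "smooth_md M" and pq: "p \<noteq> q"
    and Vp: "verts M p = {a}" and Vq: "verts M q = {b}" and a: "a \<notin> \<int>" and b: "b \<notin> \<int>"
  shows False
proof -
  have ext: "vmin M p = a" "vmax M p = a" "vmin M q = b" "vmax M q = b"
    by (simp_all add: vmin_def vmax_def Vp Vq)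
  have "\<not> minus_bullet M"
  proof
    assume "minus_bullet M"
    then have "lam (vmin M p) = 1" using sm by (simp add: smooth_md_def)
    then show False using a by (simp add: ext lam_eq_1_iff)
  qed
  moreover have "\<not> plus_bullet M"
  proof
    assume "plus_bullet M"
    then have "lam (vmax M p) = 1" using sm by (simp add: smooth_md_def)
    then show False using a by (simp add: ext lam_eq_1_iff)
  qed
  ultimately have min_cond: "card {P. vmin M P \<notin> \<int>} \<le> 2 \<and>
        of_int (\<Prod>P\<in>{P. vmin M P \<notin> \<int>}. lam (vmin M P)) * (\<Sum>P\<in>nontriv M. vmin M P) = -1"
    and max_cond: "card {P. vmax M P \<notin> \<int>} \<le> 2 \<and>
        of_int (\<Prod>P\<in>{P. vmax M P \<notin> \<int>}. lam (vmax M P)) * (\<Sum>P\<in>nontriv M. vmax M P) = 1"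
    using sm unfolding smooth_md_def by simp_all
  have fin: "finite (nontriv M)" using md by (simp add: is_multidiv_def)
  have "{P. vmin M P \<notin> \<int>} \<subseteq> nontriv M" "{P. vmax M P \<notin> \<int>} \<subseteq> nontriv M"
    by (auto simp: nontriv_def vmin_def vmax_def)
  then have fin_min: "finite {P. vmin M P \<notin> \<int>}" and fin_max: "finite {P. vmax M P \<notin> \<int>}"
    using finite_subset fin by blast+
  have sub_min: "{p, q} \<subseteq> {P. vmin M P \<notin> \<int>}" and sub_max: "{p, q} \<subseteq> {P. vmax M P \<notin> \<int>}"
    using a b ext by auto
  have nonint: "{P. vmin M P \<notin> \<int>} = {p, q}" "{P. vmax M P \<notin> \<int>} = {p, q}"
    using card_le_2_eq_pair[OF fin_min sub_min pq] card_le_2_eq_pair[OF fin_max sub_max pq]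
      min_cond max_cond by blast+
  define L where "L = lam a * lam b"
  have "of_int L * (\<Sum>P\<in>nontriv M. vmin M P) = -1" "of_int L * (\<Sum>P\<in>nontriv M. vmax M P) = 1"
    using min_cond max_cond nonint pq ext by (simp_all add: L_def)
  then have width: "of_int L * (\<Sum>P\<in>nontriv M. vmax M P - vmin M P) = 2"
    by (simp add: sum_subtractf algebra_simps)
  have "(\<Sum>P\<in>nontriv M. vmax M P - vmin M P) \<in> \<int>"
  proof (rule Ints_sum)
    fix P
    show "vmax M P - vmin M P \<in> \<int>"
    proof (cases "P \<in> {p, q}")
      case True
      then show ?thesis using ext by auto
    next
      case False
      then have "vmin M P \<in> \<int>" "vmax M P \<in> \<int>" using nonint by blast+
      then show ?thesis by simp
    qed
  qed
  then obtain k where "(\<Sum>P\<in>nontriv M. vmax M P - vmin M P) = of_int k"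
    by (auto elim: Ints_cases)
  with width have Lk: "L * k = 2"
    by (metis of_int_eq_iff of_int_mult of_int_numeral)
  have L: "L \<ge> 4"
    unfolding L_def using mult_mono[OF lam_ge_2[OF a] lam_ge_2[OF b]] lam_pos[of a] by simp
  show False
  proof (cases "k \<le> 0")
    case True
    then have "L * k \<le> 0" using L by (simp add: mult_nonneg_nonpos)
    then show False using Lk by simp
  next
    case False
    then have "L * 1 \<le> L * k" using L by (intro mult_left_mono) auto
    then show False using Lk L by simp
  qed
qed

text \<open>Since G is non-crossing, distinct edges have distinct sums; hence the vertices of
  M^(0)_0 correspond bijectively to the edges of G.\<close>
lemma edge_sums_distinct:
  assumes D: "degen_diagram M E p0 ps" and e: "(a, b) \<in> E" "(a', b') \<in> E"
    and s: "a + b = a' + b'"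
  shows "a = a' \<and> b = b'"
proof -
  have nc: "\<And>a b a' b'. (a, b) \<in> E \<Longrightarrow> (a', b') \<in> E \<Longrightarrow> a < a' \<Longrightarrow> b \<le> b'"
    using D unfolding degen_diagram_def by blast
  have "\<not> a < a'" "\<not> a' < a" using nc[OF e] nc[OF e(2,1)] s by (metis add_less_le_mono less_irrefl)+
  then show ?thesis using s by auto
qed

lemma edges_with_sum:
  assumes "degen_diagram M E p0 ps" and "(a, b) \<in> E"
  shows "{e \<in> E. fst e + snd e = a + b} = {(a, b)}"
  using edge_sums_distinct[OF assms] assms(2) by fastforce

lemma component_of_isolated_edge:
  assumes "\<And>b'. (a, b') \<in> E \<Longrightarrow> b' = b" and "\<And>a'. (a', b) \<in> E \<Longrightarrow> a' = a"
    and "(Inl a, y) \<in> ({(Inl a, Inr b) | a b. (a, b) \<in> E} \<union> {(Inr b, Inl a) | a b. (a, b) \<in> E})\<^sup>*"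
  shows "y \<in> {Inl a, Inr b}"
  using assms(3)
proof (induction rule: rtrancl_induct)
  case base
  then show ?case by simp
next
  case (step y z)
  then show ?case using assms(1,2) by auto
qed

text \<open>An edge between two non-integral vertices has degree one at both ends, so by
  connectivity it is the whole graph G.\<close>
lemma nonintegral_edge_is_whole_diagram:
  assumes D: "degen_diagram M E p0 ps" and e: "(a, b) \<in> E" and a: "a \<notin> \<int>" and b: "b \<notin> \<int>"
  shows "verts M p0 = {a} \<and> verts M ps = {b}"
proof -
  have Esub: "E \<subseteq> verts M p0 \<times> verts M ps"
    and fin: "\<And>P. finite (verts M P)"
    using D unfolding degen_diagram_def is_multidiv_def by auto
  have av: "a \<in> verts M p0" and bv: "b \<in> verts M ps" using e Esub by auto
  have deg: "\<forall>a\<in>verts M p0. card {b. (a, b) \<in> E} > 1 \<longrightarrow> a \<in> \<int>"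
      "\<forall>b\<in>verts M ps. card {a. (a, b) \<in> E} > 1 \<longrightarrow> b \<in> \<int>"
    using D unfolding degen_diagram_def by blast+
  have "card {b'. (a, b') \<in> E} \<le> 1" "card {a'. (a', b) \<in> E} \<le> 1"
    using deg av bv a b by (auto simp: not_less[symmetric])
  moreover have "finite {b'. (a, b') \<in> E}" "finite {a'. (a', b) \<in> E}"
    using Esub by (auto intro: finite_subset[OF _ fin])
  ultimately have deg_a: "\<And>b'. (a, b') \<in> E \<Longrightarrow> b' = b" and deg_b: "\<And>a'. (a', b) \<in> E \<Longrightarrow> a' = a"
    using e by (auto simp: card_le_Suc0_iff_eq)
  have "y \<in> {Inl a, Inr b}" if "y \<in> Inl ` verts M p0 \<union> Inr ` verts M ps" for y
  proof (rule component_of_isolated_edge[OF deg_a deg_b])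
    show "(Inl a, y) \<in> ({(Inl a, Inr b) | a b. (a, b) \<in> E} \<union> {(Inr b, Inl a) | a b. (a, b) \<in> E})\<^sup>*"
      using D that av unfolding degen_diagram_def Let_def by (elim conjE) (drule bspec, auto)
  qed
  then show ?thesis using av bv by blast
qed

lemma edge_has_integral_endpoint:
  assumes D: "degen_diagram M E p0 ps" and S: "smooth_md M" and e: "(a, b) \<in> E"
  shows "a \<in> \<int> \<or> b \<in> \<int>"
proof (rule ccontr)
  assume "\<not> (a \<in> \<int> \<or> b \<in> \<int>)"
  then have a: "a \<notin> \<int>" and b: "b \<notin> \<int>" by auto
  have "verts M p0 = {a}" "verts M ps = {b}"
    using nonintegral_edge_is_whole_diagram[OF D e a b] by auto
  moreover have "is_multidiv M" "p0 \<noteq> ps" using D by (auto simp: degen_diagram_def)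
  ultimately show False using not_smooth_two_nonintegral_points[OF _ S _ _ _ a b] by blast
qed

lemma lam_edge:
  assumes "degen_diagram M E p0 ps" and "smooth_md M" and "(a, b) \<in> E"
  shows "lam (a + b) = lam a * lam b"
  using lam_add_if_int edge_has_integral_endpoint[OF assms] by blast

definition push :: "(rat \<times> rat) set \<Rightarrow> pt \<Rightarrow> pt \<Rightarrow> (pdiv \<Rightarrow> rat) \<Rightarrow> pdiv \<Rightarrow> rat" where
  "push E p0 ps c y =
     (case y of
        Dv w P \<Rightarrow>
          if P = p0 then (\<Sum>(a, b)\<in>{e \<in> E. fst e + snd e = w}.
                             of_int (lam b) * c (Dv a p0) + of_int (lam a) * c (Dv b ps))
          else if P = ps then 0 else c y
      | _ \<Rightarrow> c y)"

text \<open>At the vertex a + b of M^(0)_0 the support function h^(0) takes the value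
  h_0(a) + h_s(b), the edge (a, b) being determined by its sum.\<close>
lemma hpi_edge:
  assumes "degen_diagram M E p0 ps" and "(a, b) \<in> E"
  shows "hpi E p0 ps h am ap p0 (a + b) = h p0 a + h ps b"
proof -
  have "(THE e. e \<in> E \<and> fst e + snd e = a + b) = (a, b)"
    using edges_with_sum[OF assms] by (intro the_equality) blast+
  then show ?thesis by (simp add: hpi_def)
qed

lemma Dh_special_fibre:
  assumes D: "degen_diagram M E p0 ps" and S: "smooth_md M"
  shows "Dh (M0 M E p0 ps) (hpi E p0 ps h am ap) am ap = push E p0 ps (Dh M h am ap)"
proof
  fix y
  have ne: "p0 \<noteq> ps" and Esub: "E \<subseteq> verts M p0 \<times> verts M ps"
    using D by (auto simp: degen_diagram_def)
  show "Dh (M0 M E p0 ps) (hpi E p0 ps h am ap) am ap y = push E p0 ps (Dh M h am ap) y"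
  proof (cases y)
    case (Dv w P)
    consider (zero) "P = p0" | (special) "P = ps" | (other) "P \<noteq> p0" "P \<noteq> ps" by blast
    then show ?thesis
    proof cases
      case zero
      show ?thesis
      proof (cases "\<exists>a b. (a, b) \<in> E \<and> w = a + b")
        case True
        then obtain a b where e: "(a, b) \<in> E" and w: "w = a + b" by blast
        have "a \<in> verts M p0" "b \<in> verts M ps" using e Esub by auto
        then have "push E p0 ps (Dh M h am ap) y
            = of_int (lam b) * (- of_int (lam a) * h p0 a) + of_int (lam a) * (- of_int (lam b) * h ps b)"
          using zero Dv w edges_with_sum[OF D e] ne by (simp add: push_def)
        also have "\<dots> = - of_int (lam (a + b)) * (h p0 a + h ps b)"
          using lam_edge[OF D S e] by (simp add: algebra_simps)
        also have "\<dots> = Dh (M0 M E p0 ps) (hpi E p0 ps h am ap) am ap y"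
          using zero Dv w e hpi_edge[OF D e] by (auto simp: M0_def)
        finally show ?thesis by simp
      next
        case False
        then have no_edge: "{e \<in> E. fst e + snd e = w} = {}" by auto
        show ?thesis using zero Dv False by (auto simp: push_def M0_def no_edge)
      qed
    next
      case special
      then show ?thesis using Dv ne by (simp add: push_def M0_def hpi_def hlin_def)
    next
      case other
      then show ?thesis using Dv by (simp add: push_def M0_def hpi_def)
    qed
  qed (simp_all add: push_def M0_def)
qed

lemma sum_edges_from:
  assumes "finite E"
  shows "(\<Sum>(a, b)\<in>{e \<in> E. fst e + snd e = w}. if a = v then f b else 0)
       = (\<Sum>b\<in>{b. (v, b) \<in> E}. if w = v + b then f b else (0::'a::comm_monoid_add))"
proof -
  have "(\<Sum>(a, b)\<in>{e \<in> E. fst e + snd e = w}. if a = v then f b else 0)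
      = (\<Sum>(a, b)\<in>{e \<in> E. fst e + snd e = w \<and> fst e = v}. f b)"
    using assms by (simp add: sum.inter_filter[symmetric] case_prod_beta)
  also have "\<dots> = (\<Sum>b\<in>{b. (v, b) \<in> E \<and> w = v + b}. f b)"
    by (rule sum.reindex_bij_witness[of _ "Pair v" snd]) auto
  also have "\<dots> = (\<Sum>b\<in>{b. (v, b) \<in> E}. if w = v + b then f b else 0)"
  proof -
    have "finite {b. (v, b) \<in> E}"
      using finite_imageI[OF assms, of snd] by (rule finite_subset[rotated]) force
    then show ?thesis by (simp add: sum.inter_filter[symmetric])
  qed
  finally show ?thesis .
qed

lemma sum_edges_to:
  assumes "finite E"
  shows "(\<Sum>(a, b)\<in>{e \<in> E. fst e + snd e = w}. if b = v then f a else 0)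
       = (\<Sum>a\<in>{a. (a, v) \<in> E}. if w = a + v then f a else (0::'a::comm_monoid_add))"
proof -
  have "(\<Sum>(a, b)\<in>{e \<in> E. fst e + snd e = w}. if b = v then f a else 0)
      = (\<Sum>(a, b)\<in>{e \<in> E. fst e + snd e = w \<and> snd e = v}. f a)"
    using assms by (simp add: sum.inter_filter[symmetric] case_prod_beta)
  also have "\<dots> = (\<Sum>a\<in>{a. (a, v) \<in> E \<and> w = a + v}. f a)"
    by (rule sum.reindex_bij_witness[of _ "\<lambda>a. (a, v)" fst]) auto
  also have "\<dots> = (\<Sum>a\<in>{a. (a, v) \<in> E}. if w = a + v then f a else 0)"
  proof -
    have "finite {a. (a, v) \<in> E}"
      using finite_imageI[OF assms, of fst] by (rule finite_subset[rotated]) force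
    then show ?thesis by (simp add: sum.inter_filter[symmetric])
  qed
  finally show ?thesis .
qed

lemma push_ind:
  assumes "finite E" and "p0 \<noteq> ps"
  shows "push E p0 ps (ind x) = pimg E p0 ps x"
proof
  fix y
  have times_indicator: "\<And>c P. c * (if P then 1 else 0) = (if P then c else (0::rat))"
    by simp
  show "push E p0 ps (ind x) y = pimg E p0 ps x y"
  proof (cases y)
    case (Dv w P)
    then show ?thesis using assms
      by (cases x) (auto simp: push_def ind_def times_indicator sum_edges_from sum_edges_to)
  qed (cases x; auto simp: push_def ind_def)+
qed

text \<open>Since D_h = D_x, its specialisation is push(D_x) = pimg x.\<close>
theorem proposition3p8:
  fixes M :: multidiv and E :: "(rat \<times> rat) set" and p0 ps :: pt
    and h :: "pt \<Rightarrow> rat \<Rightarrow> rat" and am ap :: rat and x :: pdiv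
  assumes "degen_diagram M E p0 ps"
    and "smooth_md M"
    and "smooth_md (M0 M E p0 ps)"
    and "x \<in> prime_divs M"
    and "cartier_supp M h am ap"
    and "Dh M h am ap = ind x"
  shows "Dh (M0 M E p0 ps) (hpi E p0 ps h am ap) am ap = pimg E p0 ps x"
proof -
  have "E \<subseteq> verts M p0 \<times> verts M ps" "finite (verts M p0 \<times> verts M ps)"
    using assms(1) unfolding degen_diagram_def is_multidiv_def by auto
  then have "finite E" by (rule finite_subset)
  moreover have "p0 \<noteq> ps" using assms(1) by (simp add: degen_diagram_def)
  ultimately show ?thesis
    using Dh_special_fibre[OF assms(1,2)] push_ind assms(6) by simp
qed

end
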